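(* Let $\mathcal{N}$ be a von Neumann algebra with projection lattice $\mathcal{P}(\mathcal{N})$, and let $\mathcal{T}\subseteq\mathcal{N}$ be a von Neumann subalgebra whose unit coincides with the unit $\hat 1$ of $\mathcal{N}$, with projection lattice $\mathcal{P}(\mathcal{T})$. Define $$\delta^i_{\mathcal{T}}:\mathcal{P}(\mathcal{N})\to\mathcal{P}(\mathcal{T}),\qquad \hat P\mapsto \bigvee\{\hat Q\in\mathcal{P}(\mathcal{T})\mid \hat Q\le\hat P\}.$$ Then for every (proper) filter $F$ in $\mathcal{P}(\mathcal{T})$, $$(\delta^i_{\mathcal{T}})^{-1}(F)=\mathcal{C}_{\mathcal{N}}(F),\qquad\text{where } \mathcal{C}_{\mathcal{N}}(F):=\{\hat Q\in\mathcal{P}(\mathcal{N})\mid \exists\,\hat P\in F:\ \hat P\le\hat Q\}.$$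
   Context: Projections are ordered by $\hat P\le\hat Q$ iff $\hat P\hat Q=\hat P$ (inclusion of ranges); the projection lattice of a von Neumann algebra is complete, so the join above exists. A (proper) filter in a lattice $\mathbb{L}$ with least element $0$ is a subset $F\subseteq\mathbb{L}$ such that (i) $0\notin F$, (ii) $a,b\in F$ implies $a\wedge b\in F$, and (iii) $a\in F$ and $b\ge a$ imply $b\in F$. The set $\mathcal{C}_{\mathcal{N}}(F)$ is called the $\mathcal{N}$-cone over $F$. *)

theory Defs
  imports Complex_Main
begin

text \<open>Complex Hilbert spaces: a real Banach space carrying a complex scalar
multiplication extending the real one, and a complex inner product (conjugate-linear
in the first argument, linear in the second) inducing the norm.\<close>

class complex_hilbert = banach +
  fixes cscale :: "complex \<Rightarrow> 'a \<Rightarrow> 'a"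
    and cinner :: "'a \<Rightarrow> 'a \<Rightarrow> complex"
  assumes cscale_of_real: "cscale (complex_of_real r) x = scaleR r x"
    and cscale_add_left: "cscale (a + b) x = cscale a x + cscale b x"
    and cscale_add_right: "cscale a (x + y) = cscale a x + cscale a y"
    and cscale_cscale: "cscale a (cscale b x) = cscale (a * b) x"
    and cinner_commute: "cinner x y = cnj (cinner y x)"
    and cinner_add_left: "cinner (x + y) z = cinner x z + cinner y z"
    and cinner_cscale_left: "cinner (cscale a x) y = cnj a * cinner x y"
    and cinner_norm: "cinner x x = complex_of_real ((norm x)\<^sup>2)"

definition bounded_op :: "('a::complex_hilbert \<Rightarrow> 'a) \<Rightarrow> bool" where
  "bounded_op A \<longleftrightarrow>
     (\<forall>x y. A (x + y) = A x + A y) \<and> (\<forall>c x. A (cscale c x) = cscale c (A x)) \<and>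
     (\<exists>K. \<forall>x. norm (A x) \<le> K * norm x)"

definition is_adjoint :: "('a::complex_hilbert \<Rightarrow> 'a) \<Rightarrow> ('a \<Rightarrow> 'a) \<Rightarrow> bool" where
  "is_adjoint A B \<longleftrightarrow> (\<forall>x y. cinner (A x) y = cinner x (B y))"

definition commutant :: "('a::complex_hilbert \<Rightarrow> 'a) set \<Rightarrow> ('a \<Rightarrow> 'a) set" where
  "commutant S = {B. bounded_op B \<and> (\<forall>A\<in>S. A \<circ> B = B \<circ> A)}"

text \<open>Von Neumann algebra on H: a self-adjoint set of bounded operators equal to its
bicommutant (hence a unital *-algebra with unit the identity of H, weak-operator closed).\<close>
definition von_neumann_algebra :: "('a::complex_hilbert \<Rightarrow> 'a) set \<Rightarrow> bool" where
  "von_neumann_algebra N \<longleftrightarrow>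
     (\<forall>A\<in>N. bounded_op A) \<and> (\<forall>A\<in>N. \<exists>B\<in>N. is_adjoint A B) \<and>
     N = commutant (commutant N)"

definition proj_lattice :: "('a::complex_hilbert \<Rightarrow> 'a) set \<Rightarrow> ('a \<Rightarrow> 'a) set" where
  "proj_lattice N = {P\<in>N. P \<circ> P = P \<and> is_adjoint P P}"

definition proj_le :: "('a::complex_hilbert \<Rightarrow> 'a) \<Rightarrow> ('a \<Rightarrow> 'a) \<Rightarrow> bool" where
  "proj_le P Q \<longleftrightarrow> P \<circ> Q = P"

definition proj_join :: "('a::complex_hilbert \<Rightarrow> 'a) set \<Rightarrow> ('a \<Rightarrow> 'a) set \<Rightarrow> ('a \<Rightarrow> 'a)" where
  "proj_join L S = (THE R. R \<in> L \<and> (\<forall>Q\<in>S. proj_le Q R) \<and>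
                          (\<forall>R'\<in>L. (\<forall>Q\<in>S. proj_le Q R') \<longrightarrow> proj_le R R'))"

definition proj_meet :: "('a::complex_hilbert \<Rightarrow> 'a) set \<Rightarrow> ('a \<Rightarrow> 'a) \<Rightarrow> ('a \<Rightarrow> 'a) \<Rightarrow> ('a \<Rightarrow> 'a)" where
  "proj_meet L P Q = (THE R. R \<in> L \<and> proj_le R P \<and> proj_le R Q \<and>
                          (\<forall>R'\<in>L. proj_le R' P \<and> proj_le R' Q \<longrightarrow> proj_le R' R))"

text \<open>Proper filter in the projection lattice L (least element: the zero operator).\<close>
definition proj_filter :: "('a::complex_hilbert \<Rightarrow> 'a) set \<Rightarrow> ('a \<Rightarrow> 'a) set \<Rightarrow> bool" where
  "proj_filter L F \<longleftrightarrow>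
     F \<subseteq> L \<and> (\<lambda>_. 0) \<notin> F \<and>
     (\<forall>a\<in>F. \<forall>b\<in>F. proj_meet L a b \<in> F) \<and>
     (\<forall>a\<in>F. \<forall>b\<in>L. proj_le a b \<longrightarrow> b \<in> F)"

definition delta_i :: "('a::complex_hilbert \<Rightarrow> 'a) set \<Rightarrow> ('a \<Rightarrow> 'a) \<Rightarrow> ('a \<Rightarrow> 'a)" where
  "delta_i T P = proj_join (proj_lattice T) {Q \<in> proj_lattice T. proj_le Q P}"

definition cone :: "('a::complex_hilbert \<Rightarrow> 'a) set \<Rightarrow> ('a \<Rightarrow> 'a) set \<Rightarrow> ('a \<Rightarrow> 'a) set" where
  "cone N F = {Q \<in> proj_lattice N. \<exists>P\<in>F. proj_le P Q}"

end

theory Submission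
  imports Defs
begin

text \<open>The inner daseinisation \<open>\<delta>\<^sup>i\<^sub>T(P)\<close> is the projection onto the orthogonal complement of
the common kernel of all projections of \<open>T\<close> below \<open>P\<close>. This projection commutes with the
commutant of \<open>T\<close> (the common kernel and its complement are invariant under every operator
commuting with \<open>T\<close>, the latter because the adjoint of such an operator, given by the Riesz
representation theorem, preserves the kernel), so it lies in \<open>T\<close> by the bicommutant property.
Being the least upper bound of those projections, \<open>\<delta>\<^sup>i\<^sub>T(P)\<close> lies below \<open>P\<close> and above every
projection of \<open>T\<close> below \<open>P\<close>; the two inclusions then follow from upward closure of \<open>F\<close>.\<close>

lemma cinner_zero_left [simp]: "cinner (0::'a::complex_hilbert) y = 0"
  using cinner_add_left[of "0::'a" 0 y] by simp

lemma cinner_add_right: "cinner (x::'a::complex_hilbert) (y + z) = cinner x y + cinner x z"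
  by (metis cinner_commute cinner_add_left complex_cnj_add)

lemma cinner_zero_right [simp]: "cinner (x::'a::complex_hilbert) 0 = 0"
  by (metis cinner_zero_left cinner_commute complex_cnj_zero)

lemma cinner_cscale_right: "cinner (x::'a::complex_hilbert) (cscale a y) = a * cinner x y"
  by (metis cinner_commute cinner_cscale_left complex_cnj_cnj complex_cnj_mult)

lemma cinner_minus_left: "cinner (- (x::'a::complex_hilbert)) y = - cinner x y"
  using cinner_add_left[of x "-x" y] by (simp add: add_eq_0_iff)

lemma cinner_diff_left: "cinner ((x::'a::complex_hilbert) - z) y = cinner x y - cinner z y"
  using cinner_add_left[of x "-z" y] cinner_minus_left[of z y] by simp

lemma cinner_minus_right: "cinner (x::'a::complex_hilbert) (- y) = - cinner x y"
  by (metis cinner_minus_left cinner_commute complex_cnj_minus)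

lemma cinner_diff_right: "cinner (x::'a::complex_hilbert) (y - z) = cinner x y - cinner x z"
  by (metis cinner_diff_left cinner_commute complex_cnj_diff)

lemma cinner_scaleR_right: "cinner (x::'a::complex_hilbert) (r *\<^sub>R y) = of_real r * cinner x y"
  by (metis cinner_cscale_right cscale_of_real)

lemma cinner_self_eq_zero: "cinner (x::'a::complex_hilbert) x = 0 \<longleftrightarrow> x = 0"
  by (simp add: cinner_norm)

lemma cinner_eq_zero_commute: "cinner (x::'a::complex_hilbert) y = 0 \<longleftrightarrow> cinner y x = 0"
  by (metis cinner_commute complex_cnj_zero)

lemma cscale_zero_right [simp]: "cscale a (0::'a::complex_hilbert) = 0"
  using cscale_add_right[of a "0::'a" 0] by simp

lemma cscale_diff_right: "cscale a ((x::'a::complex_hilbert) - y) = cscale a x - cscale a y"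
  using cscale_add_right[of a "x - y" y] by (simp add: eq_diff_eq)

lemma norm_add_square:
  "norm ((x::'a::complex_hilbert) + y)^2 = (norm x)^2 + (norm y)^2 + 2 * Re (cinner x y)"
proof -
  have "complex_of_real (norm (x + y)^2) = cinner (x + y) (x + y)" by (simp add: cinner_norm)
  also have "\<dots> = cinner x x + cinner y y + (cinner x y + cnj (cinner x y))"
    by (simp add: cinner_add_left cinner_add_right cinner_commute[of y x])
  finally have "norm (x + y)^2 = Re (cinner x x + cinner y y + (cinner x y + cnj (cinner x y)))"
    by (metis Re_complex_of_real)
  then show ?thesis by (simp add: cinner_norm)
qed

lemma norm_diff_square:
  "norm ((x::'a::complex_hilbert) - y)^2 = (norm x)^2 + (norm y)^2 - 2 * Re (cinner x y)"
  using norm_add_square[of x "-y"] by (simp add: cinner_minus_right)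

lemma Re_cinner_polarization:
  "Re (cinner (w::'a::complex_hilbert) v) = ((norm (w + v))^2 - (norm (w - v))^2) / 4"
  by (simp add: norm_add_square norm_diff_square)

lemma Im_cinner_polarization:
  "Im (cinner (w::'a::complex_hilbert) v) =
     ((norm (cscale \<i> w + v))^2 - (norm (cscale \<i> w - v))^2) / 4"
  by (simp add: Re_cinner_polarization[symmetric] cinner_cscale_left)

lemma closed_cinner_kernel:
  fixes f :: "'b::topological_space \<Rightarrow> 'a::complex_hilbert"
  assumes f: "continuous_on UNIV f"
  shows "closed {x. cinner w (f x) = 0}"
proof -
  have "{x. cinner w (f x) = 0} = {x. Re (cinner w (f x)) = 0} \<inter> {x. Im (cinner w (f x)) = 0}"
    by (auto simp: complex_eq_iff)
  moreover have "closed {x. Re (cinner w (f x)) = 0}"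
    unfolding Re_cinner_polarization by (intro closed_Collect_eq continuous_intros f) auto
  moreover have "closed {x. Im (cinner w (f x)) = 0}"
    unfolding Im_cinner_polarization by (intro closed_Collect_eq continuous_intros f) auto
  ultimately show ?thesis by auto
qed

lemma bounded_op_imp_bounded_linear: "bounded_op A \<Longrightarrow> bounded_linear A"
  unfolding bounded_op_def
proof (elim conjE exE)
  fix K assume "\<forall>x y. A (x + y) = A x + A y" and "\<forall>c x. A (cscale c x) = cscale c (A x)"
    and "\<forall>x. norm (A x) \<le> K * norm x"
  then show "bounded_linear A"
    by (intro bounded_linear_intro[of _ K]) (auto simp: mult.commute simp flip: cscale_of_real)
qed

definition csubspace :: "'a::complex_hilbert set \<Rightarrow> bool" where
  "csubspace K \<longleftrightarrow> 0 \<in> K \<and> (\<forall>x\<in>K. \<forall>y\<in>K. x + y \<in> K) \<and> (\<forall>c. \<forall>x\<in>K. cscale c x \<in> K)"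

lemma csubspace_scaleR: "csubspace K \<Longrightarrow> x \<in> K \<Longrightarrow> r *\<^sub>R x \<in> K"
  by (metis cscale_of_real csubspace_def)

lemma csubspace_diff: "csubspace K \<Longrightarrow> x \<in> K \<Longrightarrow> y \<in> K \<Longrightarrow> x - y \<in> K"
  using csubspace_scaleR[of K y "-1"] by (metis diff_conv_add_uminus scaleR_minus1_left csubspace_def)


lemma linear_le_quadratic_imp_zero:
  fixes a b :: real
  assumes le: "\<And>t. 2 * t * a \<le> t^2 * b" and "0 \<le> b"
  shows "a = 0"
proof -
  have pos: "0 < b + 1" using assms(2) by simp
  have "2 * (a / (b + 1)) * a * (b + 1)^2 \<le> (a / (b + 1))^2 * b * (b + 1)^2"
    using mult_right_mono[OF le[of "a / (b + 1)"], of "(b + 1)^2"] by simp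
  moreover have "2 * (a / (b + 1)) * a * (b + 1)^2 = 2 * a * a * (b + 1)"
    using pos by (simp add: power2_eq_square field_simps)
  moreover have "(a / (b + 1))^2 * b * (b + 1)^2 = a * a * b"
    using pos by (simp add: power_divide power2_eq_square)
  ultimately have "2 * a * a * (b + 1) \<le> a * a * b" by simp
  then have "a * a * (b + 2) \<le> 0" by (simp add: algebra_simps)
  then show ?thesis using assms(2)
    by (smt (verit) mult_pos_pos zero_less_mult_iff)
qed

text \<open>Parallelogram law at the midpoint of \<open>a\<close> and \<open>b\<close>, which lies in \<open>K\<close> and hence at distance
at least \<open>d\<close> from \<open>x\<close>.\<close>
lemma near_closest_points_close:
  fixes x a b :: "'a::complex_hilbert"
  assumes K: "csubspace K" "a \<in> K" "b \<in> K" and dist_ge: "\<And>w. w \<in> K \<Longrightarrow> d \<le> norm (x - w)"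
    and a: "norm (x - a) \<le> d + e" and b: "norm (x - b) \<le> d + f"
    and "0 \<le> d" "0 \<le> e" "e \<le> 1" "0 \<le> f" "f \<le> 1"
  shows "norm (a - b)^2 \<le> (4 * d + 2) * (e + f)"
proof -
  define mid where "mid = (1/2::real) *\<^sub>R (a + b)"
  have "mid \<in> K" using K by (auto simp: mid_def csubspace_def intro: csubspace_scaleR)
  moreover have "(x - a) + (x - b) = 2 *\<^sub>R (x - mid)" by (simp add: mid_def algebra_simps scaleR_2)
  ultimately have "2 * d \<le> norm ((x - a) + (x - b))" using dist_ge[of mid] by simp
  then have "(2 * d)^2 \<le> norm ((x - a) + (x - b))^2" using \<open>0 \<le> d\<close> by (intro power_mono) auto
  moreover have "norm ((x - a) + (x - b))^2 + norm (a - b)^2 = 2 * norm (x - a)^2 + 2 * norm (x - b)^2"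
    using norm_add_square[of "x - a" "x - b"] norm_diff_square[of "x - a" "x - b"]
    by (simp add: norm_minus_commute)
  moreover have "norm (x - a)^2 \<le> (d + e)^2" "norm (x - b)^2 \<le> (d + f)^2"
    using a b by (auto intro: power_mono)
  moreover have "e^2 \<le> e" "f^2 \<le> f" using assms(8-11) by (simp_all add: power2_eq_square mult_left_le)
  moreover have "(d + e)^2 = d^2 + 2 * (d * e) + e^2" "(d + f)^2 = d^2 + 2 * (d * f) + f^2"
    "(2 * d)^2 = 4 * d^2" "(4 * d + 2) * (e + f) = 4 * (d * e) + 4 * (d * f) + 2 * e + 2 * f"
    by (simp_all add: power2_sum algebra_simps)
  ultimately show ?thesis by linarith
qed

lemma minimizing_sequence_Cauchy:
  fixes x :: "'a::complex_hilbert"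
  assumes "csubspace K" "\<And>n. ks n \<in> K" "\<And>w. w \<in> K \<Longrightarrow> d \<le> norm (x - w)" "0 \<le> d"
    and near: "\<And>n. norm (x - ks n) \<le> d + inverse (real (Suc n))"
  shows "Cauchy ks"
proof (rule metric_CauchyI)
  define e where "e = (\<lambda>n::nat. inverse (real (Suc n)))"
  fix r :: real assume r: "0 < r"
  obtain M :: nat where "(4 * d + 2) * 2 / r^2 < real M" using reals_Archimedean2 by blast
  then have "(4 * d + 2) * 2 < real (Suc M) * r^2"
    using r by (simp add: divide_less_eq algebra_simps) (smt (verit) zero_less_power)
  then have M: "(4 * d + 2) * (2 * e M) < r^2" using r by (simp add: e_def field_simps)
  show "\<exists>M. \<forall>m\<ge>M. \<forall>n\<ge>M. dist (ks m) (ks n) < r"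
  proof (intro exI allI impI)
    fix m n assume "M \<le> m" "M \<le> n"
    then have "e m \<le> e M" "e n \<le> e M" by (auto simp: e_def field_simps)
    have "norm (ks m - ks n)^2 \<le> (4 * d + 2) * (e m + e n)"
      using assms near by (intro near_closest_points_close[where K = K and x = x])
        (auto simp: e_def inverse_le_1_iff)
    also have "\<dots> \<le> (4 * d + 2) * (2 * e M)"
      using \<open>e m \<le> e M\<close> \<open>e n \<le> e M\<close> \<open>0 \<le> d\<close> by (intro mult_left_mono) auto
    finally have "norm (ks m - ks n)^2 < r^2" using M by linarith
    then show "dist (ks m) (ks n) < r" using r by (simp add: dist_norm power_less_imp_less_base)
  qed
qed

lemma closest_point_exists:
  fixes x :: "'a::complex_hilbert"
  assumes "closed K" "csubspace K"
  shows "\<exists>k\<in>K. \<forall>w\<in>K. norm (x - k) \<le> norm (x - w)"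
proof -
  define D where "D = (\<lambda>k. norm (x - k)) ` K"
  define d where "d = Inf D"
  have "D \<noteq> {}" using assms(2) by (auto simp: D_def csubspace_def)
  have bdd: "bdd_below D" unfolding D_def by (rule bdd_belowI[of _ 0]) auto
  have dist_ge: "\<And>w. w \<in> K \<Longrightarrow> d \<le> norm (x - w)"
    unfolding d_def by (rule cInf_lower[OF _ bdd]) (simp add: D_def)
  have "0 \<le> d" unfolding d_def using \<open>D \<noteq> {}\<close> by (rule cInf_greatest) (auto simp: D_def)
  have "\<forall>n. \<exists>k\<in>K. norm (x - k) < d + inverse (real (Suc n))"
    using cInf_lessD[OF \<open>D \<noteq> {}\<close>] by (auto simp: d_def D_def)
  then obtain ks where ks: "\<And>n. ks n \<in> K" "\<And>n. norm (x - ks n) < d + inverse (real (Suc n))"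
    by metis
  have "Cauchy ks"
    using assms(2) ks dist_ge \<open>0 \<le> d\<close> by (intro minimizing_sequence_Cauchy) (auto intro: less_imp_le)
  then obtain k where lim: "ks \<longlonglongrightarrow> k" using Cauchy_convergent convergent_def by blast
  have "k \<in> K" using closed_sequentially[OF assms(1) ks(1) lim] .
  have "(\<lambda>n. norm (x - ks n)) \<longlonglongrightarrow> norm (x - k)" by (intro tendsto_intros lim)
  moreover have "(\<lambda>n. d + inverse (real (Suc n))) \<longlonglongrightarrow> d + 0"
    by (intro tendsto_intros LIMSEQ_inverse_real_of_nat)
  ultimately have "norm (x - k) \<le> d + 0"
    by (rule LIMSEQ_le) (use ks(2) less_imp_le in blast)
  then show ?thesis using \<open>k \<in> K\<close> dist_ge by force
qed

lemma closest_point_orthogonal: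
  fixes x k w :: "'a::complex_hilbert"
  assumes K: "csubspace K" "k \<in> K" "w \<in> K"
    and closest: "\<And>v. v \<in> K \<Longrightarrow> norm (x - k) \<le> norm (x - v)"
  shows "cinner w (x - k) = 0"
proof -
  have Re_zero: "Re (cinner (x - k) v) = 0" if "v \<in> K" for v
  proof (rule linear_le_quadratic_imp_zero)
    fix t :: real
    have "k + t *\<^sub>R v \<in> K" using K \<open>v \<in> K\<close> by (simp add: csubspace_def csubspace_scaleR)
    then have "norm (x - k) \<le> norm ((x - k) - t *\<^sub>R v)" using closest by (simp add: algebra_simps)
    then have "norm (x - k)^2 \<le> norm ((x - k) - t *\<^sub>R v)^2" by (intro power_mono) auto
    then show "2 * t * Re (cinner (x - k) v) \<le> t^2 * norm v ^ 2"
      by (simp add: norm_diff_square cinner_scaleR_right power_mult_distrib)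
  qed simp
  have "cscale \<i> w \<in> K" using K by (simp add: csubspace_def)
  from Re_zero[OF this] have "Im (cinner (x - k) w) = 0" by (simp add: cinner_cscale_right)
  with Re_zero[OF \<open>w \<in> K\<close>] have "cinner (x - k) w = 0" by (simp add: complex_eq_iff)
  then show ?thesis using cinner_eq_zero_commute by blast
qed


locale closed_csubspace =
  fixes K :: "'a::complex_hilbert set"
  assumes closed: "closed K" and csubspace: "csubspace K"
begin

lemma zero_mem: "0 \<in> K"
  and add_mem: "x \<in> K \<Longrightarrow> y \<in> K \<Longrightarrow> x + y \<in> K"
  and cscale_mem: "x \<in> K \<Longrightarrow> cscale c x \<in> K"
  using csubspace by (auto simp: csubspace_def)

end

definition orth_proj :: "'a::complex_hilbert set \<Rightarrow> 'a \<Rightarrow> 'a" where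
  "orth_proj K x = (SOME k. k \<in> K \<and> (\<forall>w\<in>K. cinner w (x - k) = 0))"

definition orth_proj_compl :: "'a::complex_hilbert set \<Rightarrow> 'a \<Rightarrow> 'a" where
  "orth_proj_compl K x = x - orth_proj K x"

context closed_csubspace
begin

lemma orth_proj_mem: "orth_proj K x \<in> K"
  and cinner_orth_proj_compl: "w \<in> K \<Longrightarrow> cinner w (orth_proj_compl K x) = 0"
proof -
  obtain k where "k \<in> K" "\<And>v. v \<in> K \<Longrightarrow> norm (x - k) \<le> norm (x - v)"
    using closest_point_exists[OF closed csubspace] by blast
  then have "\<exists>k. k \<in> K \<and> (\<forall>w\<in>K. cinner w (x - k) = 0)"
    using closest_point_orthogonal[OF csubspace] by blast
  from someI_ex[OF this] show "orth_proj K x \<in> K" "w \<in> K \<Longrightarrow> cinner w (orth_proj_compl K x) = 0"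
    unfolding orth_proj_def orth_proj_compl_def by blast+
qed

lemma orth_proj_unique:
  assumes "k \<in> K" "\<And>w. w \<in> K \<Longrightarrow> cinner w (x - k) = 0"
  shows "orth_proj K x = k"
proof -
  let ?p = "orth_proj K x"
  have "?p - k \<in> K" using csubspace_diff[OF csubspace orth_proj_mem assms(1)] .
  have "cinner (?p - k) (?p - k) = cinner (?p - k) (x - k) - cinner (?p - k) (orth_proj_compl K x)"
    by (simp add: orth_proj_compl_def flip: cinner_diff_right)
  also have "\<dots> = 0" using assms(2) \<open>?p - k \<in> K\<close> cinner_orth_proj_compl by simp
  finally show ?thesis by (simp add: cinner_self_eq_zero)
qed

lemma orth_proj_compl_eq_zero: "k \<in> K \<Longrightarrow> orth_proj_compl K k = 0"
  using orth_proj_unique[of k k] by (simp add: orth_proj_compl_def)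

lemma orth_proj_compl_add: "orth_proj_compl K (x + y) = orth_proj_compl K x + orth_proj_compl K y"
proof -
  have "orth_proj K (x + y) = orth_proj K x + orth_proj K y"
  proof (rule orth_proj_unique)
    show "orth_proj K x + orth_proj K y \<in> K" by (intro add_mem orth_proj_mem)
    have "x + y - (orth_proj K x + orth_proj K y) = orth_proj_compl K x + orth_proj_compl K y"
      by (simp add: orth_proj_compl_def)
    then show "cinner w (x + y - (orth_proj K x + orth_proj K y)) = 0" if "w \<in> K" for w
      using that by (simp add: cinner_add_right cinner_orth_proj_compl)
  qed
  then show ?thesis by (simp add: orth_proj_compl_def)
qed

lemma orth_proj_compl_cscale: "orth_proj_compl K (cscale c x) = cscale c (orth_proj_compl K x)"
proof -
  have "orth_proj K (cscale c x) = cscale c (orth_proj K x)"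
  proof (rule orth_proj_unique)
    show "cscale c (orth_proj K x) \<in> K" by (intro cscale_mem orth_proj_mem)
    have "cscale c x - cscale c (orth_proj K x) = cscale c (orth_proj_compl K x)"
      by (simp add: orth_proj_compl_def cscale_diff_right)
    then show "cinner w (cscale c x - cscale c (orth_proj K x)) = 0" if "w \<in> K" for w
      using that by (simp add: cinner_cscale_right cinner_orth_proj_compl)
  qed
  then show ?thesis by (simp add: orth_proj_compl_def cscale_diff_right)
qed

lemma norm_orth_proj_compl_le: "norm (orth_proj_compl K x) \<le> norm x"
proof -
  have "x = orth_proj_compl K x + orth_proj K x" by (simp add: orth_proj_compl_def)
  moreover have "cinner (orth_proj_compl K x) (orth_proj K x) = 0"
    using cinner_orth_proj_compl[OF orth_proj_mem] cinner_eq_zero_commute by blast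
  ultimately have "norm x ^ 2 = norm (orth_proj_compl K x) ^ 2 + norm (orth_proj K x) ^ 2"
    using norm_add_square[of "orth_proj_compl K x" "orth_proj K x"] by simp
  then show ?thesis by (simp add: power2_le_imp_le)
qed

lemma bounded_op_orth_proj_compl: "bounded_op (orth_proj_compl K)"
  unfolding bounded_op_def
  using orth_proj_compl_add orth_proj_compl_cscale norm_orth_proj_compl_le by (metis mult_1)

lemma orth_proj_compl_idem: "orth_proj_compl K \<circ> orth_proj_compl K = orth_proj_compl K"
proof
  fix x
  have "orth_proj K (orth_proj_compl K x) = 0"
    by (rule orth_proj_unique[OF zero_mem]) (simp add: cinner_orth_proj_compl)
  then show "(orth_proj_compl K \<circ> orth_proj_compl K) x = orth_proj_compl K x"
    by (simp add: orth_proj_compl_def)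
qed

lemma is_adjoint_orth_proj_compl: "is_adjoint (orth_proj_compl K) (orth_proj_compl K)"
  unfolding is_adjoint_def
proof (intro allI)
  fix x y
  let ?R = "orth_proj_compl K"
  have "cinner (?R x) (orth_proj K y) = 0"
    using cinner_orth_proj_compl[OF orth_proj_mem] cinner_eq_zero_commute by blast
  then have "cinner (?R x) y = cinner (?R x) (?R y)"
    using cinner_add_right[of "?R x" "?R y" "orth_proj K y"] by (simp add: orth_proj_compl_def)
  moreover have "cinner x (?R y) = cinner (?R x) (?R y)"
    using cinner_add_left[of "?R x" "orth_proj K x" "?R y"] cinner_orth_proj_compl[OF orth_proj_mem]
    by (simp add: orth_proj_compl_def)
  ultimately show "cinner (?R x) y = cinner x (?R y)" by simp
qed

lemma orth_proj_compl_commute: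
  assumes B: "bounded_linear B" and "\<And>k. k \<in> K \<Longrightarrow> B k \<in> K"
    and "\<And>y. \<forall>w\<in>K. cinner w y = 0 \<Longrightarrow> \<forall>w\<in>K. cinner w (B y) = 0"
  shows "B \<circ> orth_proj_compl K = orth_proj_compl K \<circ> B"
proof
  fix x
  have "B x - B (orth_proj K x) = B (orth_proj_compl K x)"
    using B by (simp add: orth_proj_compl_def linear_diff bounded_linear.linear)
  then have "orth_proj K (B x) = B (orth_proj K x)"
    using assms cinner_orth_proj_compl by (intro orth_proj_unique) (auto intro: orth_proj_mem)
  then show "(B \<circ> orth_proj_compl K) x = (orth_proj_compl K \<circ> B) x"
    using B by (simp add: orth_proj_compl_def linear_diff bounded_linear.linear)
qed

end

lemma riesz_representation:
  fixes g :: "'a::complex_hilbert \<Rightarrow> complex"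
  assumes add: "\<And>x y. g (x + y) = g x + g y" and cscale: "\<And>c x. g (cscale c x) = c * g x"
    and closed: "closed {x. g x = 0}"
  shows "\<exists>z. \<forall>x. g x = cinner z x"
proof (cases "\<forall>x. g x = 0")
  case True
  then show ?thesis by (intro exI[of _ 0]) simp
next
  case False
  then obtain x0 where "g x0 \<noteq> 0" by blast
  define Z where "Z = {x. g x = 0}"
  have g0: "g 0 = 0" using add[of 0 0] by simp
  have g_diff: "\<And>a b. g (a - b) = g a - g b" by (metis add diff_add_cancel eq_diff_eq)
  interpret Z: closed_csubspace Z
    using closed g0 add cscale by unfold_locales (simp_all add: Z_def csubspace_def)
  define u where "u = orth_proj_compl Z x0"
  have "g u \<noteq> 0"
    using \<open>g x0 \<noteq> 0\<close> Z.orth_proj_mem[of x0] by (simp add: u_def orth_proj_compl_def g_diff Z_def)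
  then have "cinner u u \<noteq> 0" using g0 by (auto simp: cinner_self_eq_zero)
  show ?thesis
  proof (intro exI allI)
    fix x
    text \<open>\<open>g\<close> vanishes on this combination of \<open>x\<close> and \<open>u\<close>, which is therefore orthogonal to \<open>u\<close>.\<close>
    have "cscale (g x) u - cscale (g u) x \<in> Z" by (simp add: Z_def g_diff cscale)
    then have "cinner u (cscale (g x) u - cscale (g u) x) = 0"
      using Z.cinner_orth_proj_compl cinner_eq_zero_commute unfolding u_def by blast
    then have "g x * cinner u u = g u * cinner u x" by (simp add: cinner_diff_right cinner_cscale_right)
    then have "g x = g u / cinner u u * cinner u x" using \<open>cinner u u \<noteq> 0\<close> by (simp add: field_simps)
    then show "g x = cinner (cscale (cnj (g u / cinner u u)) u) x" by (simp add: cinner_cscale_left)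
  qed
qed

lemma bounded_op_has_adjoint:
  assumes "bounded_op B"
  shows "\<exists>B'. is_adjoint B' B"
proof -
  have B: "bounded_linear B" using assms by (rule bounded_op_imp_bounded_linear)
  have "\<exists>z. \<forall>x. cinner w (B x) = cinner z x" for w
  proof (rule riesz_representation)
    show "cinner w (B (x + y)) = cinner w (B x) + cinner w (B y)" for x y
      using B by (simp add: linear_add bounded_linear.linear cinner_add_right)
    show "cinner w (B (cscale c x)) = c * cinner w (B x)" for c x
      using assms by (simp add: bounded_op_def cinner_cscale_right)
    show "closed {x. cinner w (B x) = 0}"
      using bounded_linear.continuous_on[OF B continuous_on_id] by (intro closed_cinner_kernel) simp
  qed
  then obtain B' where "\<And>w x. cinner w (B x) = cinner (B' w) x" by metis
  then show ?thesis by (auto simp: is_adjoint_def)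
qed


definition common_kernel :: "('a::complex_hilbert \<Rightarrow> 'a) set \<Rightarrow> 'a set" where
  "common_kernel S = {z. \<forall>Q\<in>S. Q z = 0}"

lemma closed_csubspace_common_kernel:
  assumes "\<And>Q. Q \<in> S \<Longrightarrow> bounded_op Q"
  shows "closed_csubspace (common_kernel S)"
proof
  have lin: "\<And>Q. Q \<in> S \<Longrightarrow> bounded_linear Q" using assms by (rule bounded_op_imp_bounded_linear)
  have "common_kernel S = (\<Inter>Q\<in>S. {z. Q z = 0})" by (auto simp: common_kernel_def)
  moreover have "closed {z. Q z = 0}" if "Q \<in> S" for Q
    using bounded_linear.continuous_on[OF lin[OF that] continuous_on_id]
    by (intro closed_Collect_eq continuous_on_const) simp
  ultimately show "closed (common_kernel S)" by auto
  have [simp]: "Q \<in> S \<Longrightarrow> Q (cscale c x) = cscale c (Q x)" for Q c x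
    using assms by (simp add: bounded_op_def)
  have [simp]: "Q \<in> S \<Longrightarrow> linear Q" for Q using lin by (simp add: bounded_linear.linear)
  show "csubspace (common_kernel S)"
    by (auto simp: csubspace_def common_kernel_def linear_0 linear_add)
qed

lemma adjoint_preserves_common_kernel:
  assumes "is_adjoint B' B" and S: "\<And>Q. Q \<in> S \<Longrightarrow> is_adjoint Q Q \<and> Q \<circ> B = B \<circ> Q"
    and "w \<in> common_kernel S"
  shows "B' w \<in> common_kernel S"
  unfolding common_kernel_def
proof (intro CollectI ballI)
  fix Q assume "Q \<in> S"
  have adj: "\<And>u v. cinner (Q u) v = cinner u (Q v)" and comm: "\<And>u. Q (B u) = B (Q u)"
    using S[OF \<open>Q \<in> S\<close>] by (auto simp: is_adjoint_def fun_eq_iff)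
  have "Q w = 0" using \<open>w \<in> common_kernel S\<close> \<open>Q \<in> S\<close> by (simp add: common_kernel_def)
  let ?z = "B' w"
  have "cinner (Q ?z) (Q ?z) = cinner ?z (Q (Q ?z))" by (rule adj)
  also have "\<dots> = cinner w (B (Q (Q ?z)))" using assms(1) by (simp add: is_adjoint_def)
  also have "\<dots> = cinner (Q w) (B (Q ?z))" by (simp add: comm adj)
  also have "\<dots> = 0" by (simp add: \<open>Q w = 0\<close>)
  finally show "Q ?z = 0" by (simp add: cinner_self_eq_zero)
qed

lemma proj_lattice_bounded_op: "von_neumann_algebra N \<Longrightarrow> P \<in> proj_lattice N \<Longrightarrow> bounded_op P"
  by (simp add: von_neumann_algebra_def proj_lattice_def)

lemma orth_proj_compl_common_kernel_mem_proj_lattice: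
  assumes T: "von_neumann_algebra T" and S: "S \<subseteq> proj_lattice T"
  shows "orth_proj_compl (common_kernel S) \<in> proj_lattice T"
proof -
  let ?K = "common_kernel S" and ?R = "orth_proj_compl (common_kernel S)"
  interpret closed_csubspace ?K
    using S proj_lattice_bounded_op[OF T] by (intro closed_csubspace_common_kernel) auto
  have "B \<circ> ?R = ?R \<circ> B" if "B \<in> commutant T" for B
  proof (rule orth_proj_compl_commute)
    have B: "bounded_op B" and comm: "\<And>Q. Q \<in> S \<Longrightarrow> Q \<circ> B = B \<circ> Q"
      using \<open>B \<in> commutant T\<close> S by (auto simp: commutant_def proj_lattice_def)
    show lin: "bounded_linear B" using B by (rule bounded_op_imp_bounded_linear)
    show "B k \<in> ?K" if "k \<in> ?K" for k
    proof -
      have "Q (B k) = 0" if "Q \<in> S" for Q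
      proof -
        have "Q (B k) = B (Q k)" using comm[OF that] by (simp add: fun_eq_iff)
        also have "Q k = 0" using that \<open>k \<in> ?K\<close> by (simp add: common_kernel_def)
        finally show ?thesis using linear_0[OF bounded_linear.linear[OF lin]] by simp
      qed
      then show ?thesis by (simp add: common_kernel_def)
    qed
    obtain B' where "is_adjoint B' B" using bounded_op_has_adjoint[OF B] ..
    have "is_adjoint Q Q \<and> Q \<circ> B = B \<circ> Q" if "Q \<in> S" for Q
      using S that comm by (auto simp: proj_lattice_def)
    then have B'_mem: "B' w \<in> ?K" if "w \<in> ?K" for w
      using adjoint_preserves_common_kernel[OF \<open>is_adjoint B' B\<close> _ that] by blast
    show "\<forall>w\<in>?K. cinner w (B y) = 0" if "\<forall>w\<in>?K. cinner w y = 0" for y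
    proof
      fix w assume "w \<in> ?K"
      have "cinner w (B y) = cinner (B' w) y" using \<open>is_adjoint B' B\<close> by (simp add: is_adjoint_def)
      also have "\<dots> = 0" using that B'_mem[OF \<open>w \<in> ?K\<close>] by blast
      finally show "cinner w (B y) = 0" .
    qed
  qed
  then have "?R \<in> commutant (commutant T)"
    by (simp add: commutant_def bounded_op_orth_proj_compl)
  then have "?R \<in> T" using T unfolding von_neumann_algebra_def by blast
  then show ?thesis
    by (simp add: proj_lattice_def orth_proj_compl_idem is_adjoint_orth_proj_compl)
qed

lemma proj_le_orth_proj_compl_common_kernel:
  assumes "\<And>Q. Q \<in> S \<Longrightarrow> bounded_op Q" and "Q \<in> S"
  shows "proj_le Q (orth_proj_compl (common_kernel S))"
proof -
  interpret closed_csubspace "common_kernel S" using assms(1) by (rule closed_csubspace_common_kernel)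
  have "Q (orth_proj (common_kernel S) x) = 0" for x
    using orth_proj_mem \<open>Q \<in> S\<close> by (simp add: common_kernel_def)
  then show ?thesis
    using bounded_op_imp_bounded_linear[OF assms(1)[OF assms(2)]]
    by (simp add: proj_le_def fun_eq_iff orth_proj_compl_def linear_diff bounded_linear.linear)
qed

lemma orth_proj_compl_common_kernel_le:
  assumes "\<And>Q. Q \<in> S \<Longrightarrow> bounded_op Q" and P: "\<And>x y. P (x + y) = P x + P y"
    and le: "\<And>Q. Q \<in> S \<Longrightarrow> proj_le Q P"
  shows "proj_le (orth_proj_compl (common_kernel S)) P"
  unfolding proj_le_def
proof
  interpret closed_csubspace "common_kernel S" using assms(1) by (rule closed_csubspace_common_kernel)
  fix x
  have "Q (x - P x) = 0" if "Q \<in> S" for Q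
  proof -
    have "Q (P x) = Q x" using le[OF that] by (simp add: proj_le_def fun_eq_iff)
    with bounded_op_imp_bounded_linear[OF assms(1)[OF that]] show ?thesis
      by (simp add: linear_diff bounded_linear.linear)
  qed
  then have "x - P x \<in> common_kernel S" by (simp add: common_kernel_def)
  then have "orth_proj_compl (common_kernel S) (x - P x) = 0" by (rule orth_proj_compl_eq_zero)
  then show "(orth_proj_compl (common_kernel S) \<circ> P) x = orth_proj_compl (common_kernel S) x"
    using orth_proj_compl_add[of "x - P x" "P x"] by simp
qed

lemma proj_le_antisym:
  assumes "is_adjoint R1 R1" "is_adjoint R2 R2" "proj_le R1 R2" "proj_le R2 R1"
  shows "R1 = R2"
proof
  fix x
  have adj1: "\<And>u v. cinner (R1 u) v = cinner u (R1 v)" and adj2: "\<And>u v. cinner (R2 u) v = cinner u (R2 v)"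
    using assms(1,2) by (auto simp: is_adjoint_def)
  have le1: "\<And>u. R1 (R2 u) = R1 u" and le2: "\<And>u. R2 (R1 u) = R2 u"
    using assms(3,4) by (auto simp: proj_le_def fun_eq_iff)
  have "cinner (R1 x) y = cinner (R2 x) y" for y
  proof -
    have "cinner (R1 x) y = cinner (R1 (R2 x)) y" by (simp add: le1)
    also have "\<dots> = cinner x (R2 (R1 y))" by (simp add: adj1 adj2)
    also have "\<dots> = cinner (R2 x) y" by (simp add: le2 adj2)
    finally show ?thesis .
  qed
  then have "cinner (R1 x - R2 x) (R1 x - R2 x) = 0" by (simp add: cinner_diff_left)
  then show "R1 x = R2 x" by (simp add: cinner_self_eq_zero)
qed

lemma proj_join_eqI:
  assumes "\<And>A. A \<in> L \<Longrightarrow> is_adjoint A A" and "R \<in> L" and "\<forall>Q\<in>S. proj_le Q R"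
    and "\<And>R'. R' \<in> L \<Longrightarrow> \<forall>Q\<in>S. proj_le Q R' \<Longrightarrow> proj_le R R'"
  shows "proj_join L S = R"
  unfolding proj_join_def using assms by (intro the_equality) (auto intro: proj_le_antisym)

lemma delta_i_eq_orth_proj_compl:
  assumes T: "von_neumann_algebra T"
  shows "delta_i T P = orth_proj_compl (common_kernel {Q \<in> proj_lattice T. proj_le Q P})"
  unfolding delta_i_def
proof (rule proj_join_eqI)
  let ?S = "{Q \<in> proj_lattice T. proj_le Q P}"
  have bop: "\<And>Q. Q \<in> ?S \<Longrightarrow> bounded_op Q" using proj_lattice_bounded_op[OF T] by blast
  show "orth_proj_compl (common_kernel ?S) \<in> proj_lattice T"
    using T by (rule orth_proj_compl_common_kernel_mem_proj_lattice) blast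
  show "\<forall>Q\<in>?S. proj_le Q (orth_proj_compl (common_kernel ?S))"
    using bop by (blast intro: proj_le_orth_proj_compl_common_kernel)
  show "proj_le (orth_proj_compl (common_kernel ?S)) R'"
    if "R' \<in> proj_lattice T" "\<forall>Q\<in>?S. proj_le Q R'" for R'
  proof (rule orth_proj_compl_common_kernel_le)
    show "R' (x + y) = R' x + R' y" for x y
      using proj_lattice_bounded_op[OF T that(1)] by (simp add: bounded_op_def)
    show "Q \<in> ?S \<Longrightarrow> bounded_op Q" for Q by (rule bop)
    show "Q \<in> ?S \<Longrightarrow> proj_le Q R'" for Q using that(2) by blast
  qed
qed (simp add: proj_lattice_def)


lemma delta_i_mem_proj_lattice: "von_neumann_algebra T \<Longrightarrow> delta_i T P \<in> proj_lattice T"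
  by (simp add: delta_i_eq_orth_proj_compl orth_proj_compl_common_kernel_mem_proj_lattice)

lemma le_delta_i:
  assumes "von_neumann_algebra T" "Q \<in> proj_lattice T" "proj_le Q P"
  shows "proj_le Q (delta_i T P)"
  unfolding delta_i_eq_orth_proj_compl[OF assms(1)]
  using assms proj_lattice_bounded_op by (intro proj_le_orth_proj_compl_common_kernel) auto

lemma delta_i_le:
  assumes "von_neumann_algebra T" "\<And>x y. P (x + y) = P x + P y"
  shows "proj_le (delta_i T P) P"
  unfolding delta_i_eq_orth_proj_compl[OF assms(1)]
  using assms proj_lattice_bounded_op by (intro orth_proj_compl_common_kernel_le) auto

theorem lemma1:
  fixes N T :: "('a::complex_hilbert \<Rightarrow> 'a) set"
    and F :: "('a \<Rightarrow> 'a) set"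
  assumes "von_neumann_algebra N"
    and "von_neumann_algebra T"
    and "T \<subseteq> N"
    and "proj_filter (proj_lattice T) F"
  shows "{P \<in> proj_lattice N. delta_i T P \<in> F} = cone N F"
proof -
  have F_sub: "F \<subseteq> proj_lattice T"
    and F_up: "\<And>a b. a \<in> F \<Longrightarrow> b \<in> proj_lattice T \<Longrightarrow> proj_le a b \<Longrightarrow> b \<in> F"
    using assms(4) by (auto simp: proj_filter_def)
  have "delta_i T P \<in> F \<longleftrightarrow> (\<exists>P0\<in>F. proj_le P0 P)" if "P \<in> proj_lattice N" for P
  proof
    assume "delta_i T P \<in> F"
    moreover have "proj_le (delta_i T P) P"
      using delta_i_le[OF assms(2)] proj_lattice_bounded_op[OF assms(1) that]
      by (simp add: bounded_op_def)
    ultimately show "\<exists>P0\<in>F. proj_le P0 P" by blast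
  next
    assume "\<exists>P0\<in>F. proj_le P0 P"
    then obtain P0 where "P0 \<in> F" "proj_le P0 P" by blast
    then have "proj_le P0 (delta_i T P)" using le_delta_i[OF assms(2)] F_sub by blast
    then show "delta_i T P \<in> F" using F_up \<open>P0 \<in> F\<close> delta_i_mem_proj_lattice[OF assms(2)] by blast
  qed
  then show ?thesis by (auto simp: cone_def)
qed

end
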